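(* Fix $b>0$, $c>0$ and $0<\theta<c$, and let $a>0$ vary. There exists a finite threshold $\bar a_F$ such that for every $a\ge\bar a_F$ the truncated contest admits no on-domain mixed equilibrium.
   Context: $P(x,y)=\tfrac12+(x-y)\bigl(c-b(x+y)+axy\bigr)$, $\bar P=\min\{1,\max\{0,P\}\}$. The truncated contest is the two-player complete-information game with efforts $x,y\ge0$ and payoffs $\bar P(x,y)-\theta x$ for $X$ and $1-\bar P(x,y)-\theta y$ for $Y$; mixed strategies are probability distributions on $[0,\infty)$ with finite second moments. A mixed equilibrium is one in which some player uses a nondegenerate distribution; it is on-domain if $0\le P(x,y)\le1$ for all pairs $(x,y)$ in the product of the supports of the equilibrium strategies. *)

theory Defs
  imports "HOL-Probability.Probability"
begin

definition contestP :: "real \<Rightarrow> real \<Rightarrow> real \<Rightarrow> real \<Rightarrow> real \<Rightarrow> real" where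
  "contestP a b c x y = 1/2 + (x - y) * (c - b * (x + y) + a * x * y)"

definition contestPbar :: "real \<Rightarrow> real \<Rightarrow> real \<Rightarrow> real \<Rightarrow> real \<Rightarrow> real" where
  "contestPbar a b c x y = min 1 (max 0 (contestP a b c x y))"

definition mixed_strategy :: "real measure \<Rightarrow> bool" where
  "mixed_strategy \<mu> \<longleftrightarrow> prob_space \<mu> \<and> sets \<mu> = sets borel \<and>
     (AE x in \<mu>. 0 \<le> x) \<and> integrable \<mu> (\<lambda>x. x\<^sup>2)"

definition payoffX :: "real \<Rightarrow> real \<Rightarrow> real \<Rightarrow> real \<Rightarrow> real measure \<Rightarrow> real measure \<Rightarrow> real" where
  "payoffX a b c \<theta> \<mu> \<nu> =
     (\<integral>z. contestPbar a b c (fst z) (snd z) - \<theta> * fst z \<partial>(\<mu> \<Otimes>\<^sub>M \<nu>))"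

definition payoffY :: "real \<Rightarrow> real \<Rightarrow> real \<Rightarrow> real \<Rightarrow> real measure \<Rightarrow> real measure \<Rightarrow> real" where
  "payoffY a b c \<theta> \<mu> \<nu> =
     (\<integral>z. 1 - contestPbar a b c (fst z) (snd z) - \<theta> * snd z \<partial>(\<mu> \<Otimes>\<^sub>M \<nu>))"

definition truncated_equilibrium ::
  "real \<Rightarrow> real \<Rightarrow> real \<Rightarrow> real \<Rightarrow> real measure \<Rightarrow> real measure \<Rightarrow> bool" where
  "truncated_equilibrium a b c \<theta> \<mu> \<nu> \<longleftrightarrow>
     mixed_strategy \<mu> \<and> mixed_strategy \<nu> \<and>
     (\<forall>\<mu>'. mixed_strategy \<mu>' \<longrightarrow> payoffX a b c \<theta> \<mu>' \<nu> \<le> payoffX a b c \<theta> \<mu> \<nu>) \<and>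
     (\<forall>\<nu>'. mixed_strategy \<nu>' \<longrightarrow> payoffY a b c \<theta> \<mu> \<nu>' \<le> payoffY a b c \<theta> \<mu> \<nu>)"

definition msupport :: "real measure \<Rightarrow> real set" where
  "msupport \<mu> = {x. \<forall>e>0. emeasure \<mu> (ball x e) > 0}"

definition nondegenerate :: "real measure \<Rightarrow> bool" where
  "nondegenerate \<mu> \<longleftrightarrow> \<not> (\<exists>z. AE x in \<mu>. x = z)"

definition mixed_equilibrium ::
  "real \<Rightarrow> real \<Rightarrow> real \<Rightarrow> real \<Rightarrow> real measure \<Rightarrow> real measure \<Rightarrow> bool" where
  "mixed_equilibrium a b c \<theta> \<mu> \<nu> \<longleftrightarrow>
     truncated_equilibrium a b c \<theta> \<mu> \<nu> \<and> (nondegenerate \<mu> \<or> nondegenerate \<nu>)"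

definition on_domain :: "real \<Rightarrow> real \<Rightarrow> real \<Rightarrow> real measure \<Rightarrow> real measure \<Rightarrow> bool" where
  "on_domain a b c \<mu> \<nu> \<longleftrightarrow>
     (\<forall>x\<in>msupport \<mu>. \<forall>y\<in>msupport \<nu>. 0 \<le> contestP a b c x y \<and> contestP a b c x y \<le> 1)"

end

theory Submission
  imports Defs
begin

text \<open>
  The contest is constant-sum, so in equilibrium each strategy is unexploitable: no pure effort
  earns more against it than it earns against itself, and the opponent's support consists of
  best responses. On the domain, the payoff of effort \<open>x\<close> against \<open>\<rho>\<close> exceeds that benchmark by
  a quadratic in \<open>x\<close> whose coefficients come from the first two moments of \<open>\<rho>\<close>, so the opponent's
  support lies in its zero set and has at most two points, unless the quadratic vanishes
  identically. For large \<open>a\<close> that is impossible: the resulting moment equations would make the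
  small effort \<open>1/sqrt a\<close> profitable, as it wins outright against the upper tail of \<open>\<rho>\<close>.

  So a nondegenerate equilibrium strategy has two atoms \<open>y1 < y2\<close> and is indifferent between
  them. If \<open>P y1 y2 \<ge> 1\<close> the indifference fails; if \<open>P y1 y2 \<le> 0\<close>, the first-order condition at
  \<open>y1\<close> puts so much weight on \<open>y2\<close> that overbidding \<open>y2\<close> slightly pays; otherwise the first-order
  condition at the interior maximum \<open>y2\<close> and indifference at \<open>y1\<close> are exactly the moment
  equations, excluded above.
\<close>

section \<open>Win probabilities\<close>

lemma contestP_diag: "contestP a b c x x = 1/2"
  by (simp add: contestP_def)

lemma contestP_swap: "contestP a b c y x = 1 - contestP a b c x y"
  by (simp add: contestP_def algebra_simps)

lemma contestP_poly_snd:
  "contestP a b c x y = (1/2 + c*x - b*x\<^sup>2) + (a*x\<^sup>2 - c) * y + (b - a*x) * y\<^sup>2"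
  by (simp add: contestP_def algebra_simps power2_eq_square)

lemma contestP_shift_fst:
  "contestP a b c (x + e) y =
     contestP a b c x y + e * (c - 2*b*x + 2*a*x*y - a*y\<^sup>2) + e\<^sup>2 * (a*y - b)"
  by (simp add: contestP_def algebra_simps power2_eq_square)

lemma contestPbar_swap: "contestPbar a b c y x = 1 - contestPbar a b c x y"
  by (auto simp: contestPbar_def contestP_swap[of a b c y x] min_def max_def)

lemma contestPbar_diag: "contestPbar a b c x x = 1/2"
  by (simp add: contestPbar_def contestP_diag)

lemma contestPbar_nonneg: "0 \<le> contestPbar a b c x y"
  and contestPbar_le_one: "contestPbar a b c x y \<le> 1"
  by (auto simp: contestPbar_def)

lemma contestPbar_eq_contestP:
  "0 \<le> contestP a b c x y \<Longrightarrow> contestP a b c x y \<le> 1 \<Longrightarrow> contestPbar a b c x y = contestP a b c x y"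
  by (simp add: contestPbar_def)

lemma contestPbar_eq_one: "1 \<le> contestP a b c x y \<Longrightarrow> contestPbar a b c x y = 1"
  by (simp add: contestPbar_def)

lemma contestPbar_eq_zero: "contestP a b c x y \<le> 0 \<Longrightarrow> contestPbar a b c x y = 0"
  by (simp add: contestPbar_def)

lemma min_one_contestP_le_contestPbar: "min 1 (contestP a b c x y) \<le> contestPbar a b c x y"
  by (simp add: contestPbar_def)

lemma borel_measurable_contestPbar[measurable]:
  "(\<lambda>z. contestPbar a b c (fst z) (snd z)) \<in> borel_measurable (borel \<Otimes>\<^sub>M borel)"
  "(\<lambda>z. contestPbar a b c (snd z) (fst z)) \<in> borel_measurable (borel \<Otimes>\<^sub>M borel)"
  "contestPbar a b c x \<in> borel_measurable borel"
  unfolding contestPbar_def contestP_def by measurable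

lemma mixed_strategy_prob_space: "mixed_strategy \<rho> \<Longrightarrow> prob_space \<rho>"
  and mixed_strategy_sets: "mixed_strategy \<rho> \<Longrightarrow> sets \<rho> = sets borel"
  and mixed_strategy_nonneg: "mixed_strategy \<rho> \<Longrightarrow> AE x in \<rho>. 0 \<le> x"
  and mixed_strategy_integrable_square: "mixed_strategy \<rho> \<Longrightarrow> integrable \<rho> (\<lambda>x. x\<^sup>2)"
  by (simp_all add: mixed_strategy_def)

lemma mixed_strategy_measurable:
  "mixed_strategy \<rho> \<Longrightarrow> f \<in> borel_measurable borel \<Longrightarrow> f \<in> borel_measurable \<rho>"
  using measurable_cong_sets[OF mixed_strategy_sets refl] by blast

lemma pair_measurable_if_sets_borel:
  assumes "sets M = sets borel" "sets N = sets borel" "f \<in> borel_measurable (borel \<Otimes>\<^sub>M borel)"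
  shows "f \<in> borel_measurable (M \<Otimes>\<^sub>M N)"
proof -
  have "sets (M \<Otimes>\<^sub>M N) = sets (borel \<Otimes>\<^sub>M borel)"
    by (rule sets_pair_measure_cong) (use assms in auto)
  then show ?thesis using assms(3) measurable_cong_sets by blast
qed

lemma mixed_strategy_pair_measurable:
  "mixed_strategy \<mu> \<Longrightarrow> mixed_strategy \<nu> \<Longrightarrow> f \<in> borel_measurable (borel \<Otimes>\<^sub>M borel) \<Longrightarrow>
    f \<in> borel_measurable (\<mu> \<Otimes>\<^sub>M \<nu>)"
  by (rule pair_measurable_if_sets_borel[OF mixed_strategy_sets mixed_strategy_sets])

lemma mixed_strategy_pair_prob_space:
  "mixed_strategy \<mu> \<Longrightarrow> mixed_strategy \<nu> \<Longrightarrow> pair_prob_space \<mu> \<nu>"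
  using mixed_strategy_prob_space
  by (simp add: pair_prob_space_def pair_sigma_finite_def prob_space_imp_sigma_finite)

lemma mixed_strategy_integrable_id:
  assumes "mixed_strategy \<rho>"
  shows "integrable \<rho> (\<lambda>x. x)"
proof -
  interpret prob_space \<rho> using assms mixed_strategy_prob_space by blast
  have "integrable \<rho> (\<lambda>x. 1 + x\<^sup>2)"
    using mixed_strategy_integrable_square[OF assms] by simp
  moreover have "(\<lambda>x. x) \<in> borel_measurable \<rho>"
    using mixed_strategy_measurable[OF assms, of "\<lambda>x. x"] by simp
  moreover have "\<bar>x\<bar> \<le> 1 + x\<^sup>2" for x :: real
  proof (cases "\<bar>x\<bar> \<le> 1")
    case False
    then have "\<bar>x\<bar> * 1 \<le> \<bar>x\<bar> * \<bar>x\<bar>" by (intro mult_left_mono) auto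
    then show ?thesis by (simp add: power2_eq_square)
  qed (simp add: add_increasing2)
  then have "AE x in \<rho>. norm x \<le> norm (1 + x\<^sup>2)" by simp
  ultimately show ?thesis by (rule Bochner_Integration.integrable_bound)
qed

lemma mixed_strategy_return:
  assumes "0 \<le> z"
  shows "mixed_strategy (return borel z)"
proof -
  interpret prob_space "return borel z" by (rule prob_space_return) simp
  have ae: "AE x in return borel z. x = z" by (simp add: AE_return)
  have "integrable (return borel z) (\<lambda>x::real. x\<^sup>2)"
    by (rule integrable_const_bound[where B="z\<^sup>2"]) (use ae in auto)
  then show ?thesis unfolding mixed_strategy_def
    using ae assms prob_space_return[of z borel] by (auto elim!: AE_mp)
qed

section \<open>Payoffs and equilibrium\<close>

definition pure_payoff :: "real \<Rightarrow> real \<Rightarrow> real \<Rightarrow> real \<Rightarrow> real measure \<Rightarrow> real \<Rightarrow> real" where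
  "pure_payoff a b c \<theta> \<rho> z = (\<integral>w. contestPbar a b c z w \<partial>\<rho>) - \<theta> * z"

definition self_payoff :: "real \<Rightarrow> real measure \<Rightarrow> real" where
  "self_payoff \<theta> \<rho> = 1/2 - \<theta> * (\<integral>w. w \<partial>\<rho>)"

definition unexploitable :: "real \<Rightarrow> real \<Rightarrow> real \<Rightarrow> real \<Rightarrow> real measure \<Rightarrow> bool" where
  "unexploitable a b c \<theta> \<rho> \<longleftrightarrow> (\<forall>z\<ge>0. pure_payoff a b c \<theta> \<rho> z \<le> self_payoff \<theta> \<rho>)"

lemma integrable_contestPbar:
  assumes "mixed_strategy \<rho>"
  shows "integrable \<rho> (contestPbar a b c x)"
proof -
  interpret prob_space \<rho> using assms mixed_strategy_prob_space by blast
  show ?thesis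
    by (rule integrable_const_bound[where B=1])
      (use contestPbar_nonneg contestPbar_le_one
        mixed_strategy_measurable[OF assms borel_measurable_contestPbar(3)] in auto)
qed

lemma integrable_contestPbar_pair:
  assumes "mixed_strategy \<mu>" "mixed_strategy \<nu>"
  shows "integrable (\<mu> \<Otimes>\<^sub>M \<nu>) (\<lambda>(x,y). contestPbar a b c x y)"
proof -
  interpret pair_prob_space \<mu> \<nu> using assms mixed_strategy_pair_prob_space by blast
  have "(\<lambda>(x,y). contestPbar a b c x y) \<in> borel_measurable (\<mu> \<Otimes>\<^sub>M \<nu>)"
    using mixed_strategy_pair_measurable[OF assms borel_measurable_contestPbar(1)]
    by (simp add: case_prod_beta')
  then show ?thesis
    by (intro integrable_const_bound[where B=1]) (auto simp: contestPbar_nonneg contestPbar_le_one)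
qed

lemma integrable_fst_pair:
  assumes "mixed_strategy \<mu>" "mixed_strategy \<nu>"
  shows "integrable (\<mu> \<Otimes>\<^sub>M \<nu>) (\<lambda>(x,y). x)"
proof -
  interpret pair_prob_space \<mu> \<nu> using assms mixed_strategy_pair_prob_space by blast
  have "(\<lambda>(x::real, y::real). x) \<in> borel_measurable (\<mu> \<Otimes>\<^sub>M \<nu>)"
    using mixed_strategy_pair_measurable[OF assms, of fst] by (simp add: case_prod_beta')
  then show ?thesis
    by (rule Fubini_integrable) (use mixed_strategy_integrable_id[OF assms(1)] in auto)
qed

lemma borel_measurable_pure_payoff:
  assumes "mixed_strategy \<rho>"
  shows "pure_payoff a b c \<theta> \<rho> \<in> borel_measurable borel"
proof -
  interpret prob_space \<rho> using assms mixed_strategy_prob_space by blast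
  have "(\<lambda>z. contestPbar a b c (fst z) (snd z)) \<in> borel_measurable (borel \<Otimes>\<^sub>M \<rho>)"
    by (rule pair_measurable_if_sets_borel[OF refl mixed_strategy_sets[OF assms]]) simp
  then have "case_prod (contestPbar a b c) \<in> borel_measurable (borel \<Otimes>\<^sub>M \<rho>)"
    by (simp add: case_prod_beta')
  then have "(\<lambda>x. \<integral>y. contestPbar a b c x y \<partial>\<rho>) \<in> borel_measurable borel"
    by (rule borel_measurable_lebesgue_integral)
  then show ?thesis unfolding pure_payoff_def by measurable
qed

lemma integrable_integral_contestPbar:
  assumes "mixed_strategy \<mu>" "mixed_strategy \<nu>"
  shows "integrable \<mu> (\<lambda>x. \<integral>y. contestPbar a b c x y \<partial>\<nu>)"
proof -
  interpret pair_prob_space \<mu> \<nu> using assms mixed_strategy_pair_prob_space by blast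
  show ?thesis using integrable_fst[OF integrable_contestPbar_pair[OF assms]] by simp
qed

lemma integral_pure_payoff:
  assumes "mixed_strategy \<mu>" "mixed_strategy \<nu>"
  shows "integrable \<mu> (pure_payoff a b c \<theta> \<nu>)"
    and "(\<integral>x. pure_payoff a b c \<theta> \<nu> x \<partial>\<mu>) =
           (\<integral>x. (\<integral>y. contestPbar a b c x y \<partial>\<nu>) \<partial>\<mu>) - \<theta> * (\<integral>x. x \<partial>\<mu>)"
  unfolding pure_payoff_def
  using integrable_integral_contestPbar[OF assms] mixed_strategy_integrable_id[OF assms(1)] by auto

lemma payoffX_eq_integral_pure_payoff:
  assumes "mixed_strategy \<mu>" "mixed_strategy \<nu>"
  shows "payoffX a b c \<theta> \<mu> \<nu> = (\<integral>x. pure_payoff a b c \<theta> \<nu> x \<partial>\<mu>)"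
proof -
  interpret pair_prob_space \<mu> \<nu> using assms mixed_strategy_pair_prob_space by blast
  have "integrable (\<mu> \<Otimes>\<^sub>M \<nu>) (\<lambda>(x,y). contestPbar a b c x y - \<theta> * x)"
    using integrable_contestPbar_pair[OF assms] integrable_fst_pair[OF assms]
    by (auto simp: case_prod_beta')
  then have "payoffX a b c \<theta> \<mu> \<nu> = (\<integral>x. (\<integral>y. contestPbar a b c x y - \<theta> * x \<partial>\<nu>) \<partial>\<mu>)"
    unfolding payoffX_def using integral_fst[symmetric] by (simp add: case_prod_beta')
  also have "\<dots> = (\<integral>x. pure_payoff a b c \<theta> \<nu> x \<partial>\<mu>)"
    unfolding pure_payoff_def
    using integrable_contestPbar[OF assms(2)] by (simp add: M2.prob_space)
  finally show ?thesis .
qed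

lemma payoffY_eq_payoffX:
  assumes "mixed_strategy \<mu>" "mixed_strategy \<nu>"
  shows "payoffY a b c \<theta> \<mu> \<nu> = payoffX a b c \<theta> \<nu> \<mu>"
proof -
  interpret pair_prob_space \<nu> \<mu> using assms mixed_strategy_pair_prob_space by blast
  have "(\<integral>(x,y). (\<lambda>z. contestPbar a b c (fst z) (snd z) - \<theta> * fst z) (y,x) \<partial>(\<mu> \<Otimes>\<^sub>M \<nu>)) =
      payoffX a b c \<theta> \<nu> \<mu>"
    unfolding payoffX_def
    by (rule integral_product_swap, rule mixed_strategy_pair_measurable[OF assms(2,1)]) measurable
  then show ?thesis
    unfolding payoffY_def by (simp add: case_prod_beta' contestPbar_swap[of a b c "snd _" "fst _"])
qed

lemma integral_contestPbar_swap:
  assumes "mixed_strategy \<mu>" "mixed_strategy \<nu>"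
  shows "(\<integral>x. (\<integral>y. contestPbar a b c x y \<partial>\<nu>) \<partial>\<mu>) + (\<integral>y. (\<integral>x. contestPbar a b c y x \<partial>\<mu>) \<partial>\<nu>) = 1"
proof -
  interpret pair_prob_space \<mu> \<nu> using assms mixed_strategy_pair_prob_space by blast
  have inner: "(\<integral>x. contestPbar a b c x y \<partial>\<mu>) = 1 - (\<integral>x. contestPbar a b c y x \<partial>\<mu>)" for y
    using integrable_contestPbar[OF assms(1)]
    by (simp add: contestPbar_swap[of a b c _ y] M1.prob_space)
  have "(\<integral>x. (\<integral>y. contestPbar a b c x y \<partial>\<nu>) \<partial>\<mu>) = (\<integral>y. (\<integral>x. contestPbar a b c x y \<partial>\<mu>) \<partial>\<nu>)"
    by (rule Fubini_integral[symmetric]) (use integrable_contestPbar_pair[OF assms] in simp)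
  also have "\<dots> = 1 - (\<integral>y. (\<integral>x. contestPbar a b c y x \<partial>\<mu>) \<partial>\<nu>)"
    unfolding inner
    by (subst Bochner_Integration.integral_diff)
      (use integrable_integral_contestPbar[OF assms(2,1)] M2.prob_space in auto)
  finally show ?thesis by simp
qed

lemma payoffX_constant_sum:
  assumes "mixed_strategy \<mu>" "mixed_strategy \<nu>"
  shows "payoffX a b c \<theta> \<mu> \<nu> + payoffX a b c \<theta> \<nu> \<mu> = self_payoff \<theta> \<mu> + self_payoff \<theta> \<nu>"
  using integral_contestPbar_swap[OF assms, of a b c]
  by (simp add: payoffX_eq_integral_pure_payoff assms integral_pure_payoff(2) self_payoff_def
      algebra_simps)

lemma payoffX_self: "mixed_strategy \<rho> \<Longrightarrow> payoffX a b c \<theta> \<rho> \<rho> = self_payoff \<theta> \<rho>"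
  using payoffX_constant_sum[of \<rho> \<rho>] by simp

lemma payoffX_return:
  assumes "mixed_strategy \<rho>" "0 \<le> z"
  shows "payoffX a b c \<theta> (return borel z) \<rho> = pure_payoff a b c \<theta> \<rho> z"
  using payoffX_eq_integral_pure_payoff[OF mixed_strategy_return[OF assms(2)] assms(1)]
    borel_measurable_pure_payoff[OF assms(1)] by (simp add: integral_return)

lemma truncated_equilibrium_commute:
  assumes "truncated_equilibrium a b c \<theta> \<mu> \<nu>"
  shows "truncated_equilibrium a b c \<theta> \<nu> \<mu>"
proof -
  have \<mu>: "mixed_strategy \<mu>" and \<nu>: "mixed_strategy \<nu>"
    and X: "\<And>\<mu>'. mixed_strategy \<mu>' \<Longrightarrow> payoffX a b c \<theta> \<mu>' \<nu> \<le> payoffX a b c \<theta> \<mu> \<nu>"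
    and Y: "\<And>\<nu>'. mixed_strategy \<nu>' \<Longrightarrow> payoffY a b c \<theta> \<mu> \<nu>' \<le> payoffY a b c \<theta> \<mu> \<nu>"
    using assms unfolding truncated_equilibrium_def by blast+
  have "payoffX a b c \<theta> \<nu>' \<mu> \<le> payoffX a b c \<theta> \<nu> \<mu>" if "mixed_strategy \<nu>'" for \<nu>'
    using Y[OF that] payoffY_eq_payoffX[OF \<mu> that] payoffY_eq_payoffX[OF \<mu> \<nu>] by simp
  moreover have "payoffY a b c \<theta> \<nu> \<mu>' \<le> payoffY a b c \<theta> \<nu> \<mu>" if "mixed_strategy \<mu>'" for \<mu>'
    using X[OF that] payoffY_eq_payoffX[OF \<nu> that] payoffY_eq_payoffX[OF \<nu> \<mu>] by simp
  ultimately show ?thesis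
    unfolding truncated_equilibrium_def using \<mu> \<nu> by blast
qed

lemma truncated_equilibrium_value:
  assumes "truncated_equilibrium a b c \<theta> \<mu> \<nu>"
  shows "payoffX a b c \<theta> \<mu> \<nu> = self_payoff \<theta> \<nu>"
proof -
  \<comment> \<open>copying the opponent secures its self-payoff; by the constant sum both bounds are tight\<close>
  have "self_payoff \<theta> \<nu> \<le> payoffX a b c \<theta> \<mu> \<nu>" if "truncated_equilibrium a b c \<theta> \<mu> \<nu>" for \<mu> \<nu>
  proof -
    have "mixed_strategy \<nu>" "payoffX a b c \<theta> \<nu> \<nu> \<le> payoffX a b c \<theta> \<mu> \<nu>"
      using that unfolding truncated_equilibrium_def by blast+
    then show ?thesis using payoffX_self by metis
  qed
  from this[OF assms] this[OF truncated_equilibrium_commute[OF assms]]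
  have "self_payoff \<theta> \<nu> \<le> payoffX a b c \<theta> \<mu> \<nu>" "self_payoff \<theta> \<mu> \<le> payoffX a b c \<theta> \<nu> \<mu>" .
  moreover have "mixed_strategy \<mu>" "mixed_strategy \<nu>"
    using assms unfolding truncated_equilibrium_def by blast+
  ultimately show ?thesis using payoffX_constant_sum[of \<mu> \<nu> a b c \<theta>] by linarith
qed

lemma truncated_equilibrium_unexploitable:
  assumes "truncated_equilibrium a b c \<theta> \<mu> \<nu>"
  shows "unexploitable a b c \<theta> \<nu>"
  unfolding unexploitable_def
proof (intro allI impI)
  fix z :: real
  assume "0 \<le> z"
  have "mixed_strategy \<nu>" "payoffX a b c \<theta> (return borel z) \<nu> \<le> payoffX a b c \<theta> \<mu> \<nu>"
    using assms mixed_strategy_return[OF \<open>0 \<le> z\<close>] unfolding truncated_equilibrium_def by blast+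
  then show "pure_payoff a b c \<theta> \<nu> z \<le> self_payoff \<theta> \<nu>"
    using payoffX_return[OF _ \<open>0 \<le> z\<close>] truncated_equilibrium_value[OF assms] by simp
qed

lemma (in prob_space) AE_eq_if_expectation_eq_upper_bound:
  fixes g :: "'a \<Rightarrow> real"
  assumes "integrable M g" "AE x in M. g x \<le> m" "expectation g = m"
  shows "AE x in M. g x = m"
proof -
  have "integrable M (\<lambda>x. m - g x)" using assms(1) by auto
  moreover have "expectation (\<lambda>x. m - g x) = 0"
    using assms(1,3) by (simp add: prob_space)
  moreover have "AE x in M. 0 \<le> m - g x"
    using assms(2) by eventually_elim simp
  ultimately have "AE x in M. m - g x = 0"
    using integral_nonneg_eq_0_iff_AE by blast
  then show ?thesis by eventually_elim simp
qed

lemma AE_pure_payoff_eq_self_payoff: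
  assumes "mixed_strategy \<mu>" "mixed_strategy \<nu>" "unexploitable a b c \<theta> \<nu>"
    and "payoffX a b c \<theta> \<mu> \<nu> = self_payoff \<theta> \<nu>"
  shows "AE x in \<mu>. pure_payoff a b c \<theta> \<nu> x = self_payoff \<theta> \<nu>"
proof -
  interpret prob_space \<mu> using assms(1) mixed_strategy_prob_space by blast
  show ?thesis
  proof (rule AE_eq_if_expectation_eq_upper_bound)
    show "integrable \<mu> (pure_payoff a b c \<theta> \<nu>)" by (rule integral_pure_payoff(1)[OF assms(1,2)])
    show "AE x in \<mu>. pure_payoff a b c \<theta> \<nu> x \<le> self_payoff \<theta> \<nu>"
      using mixed_strategy_nonneg[OF assms(1)]
      by eventually_elim (use assms(3) in \<open>simp add: unexploitable_def\<close>)
    show "expectation (pure_payoff a b c \<theta> \<nu>) = self_payoff \<theta> \<nu>"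
      using assms(1,2,4) by (simp add: payoffX_eq_integral_pure_payoff)
  qed
qed

lemma AE_in_msupport:
  assumes "sets M = sets borel"
  shows "AE x in M. x \<in> msupport M"
proof -
  define S where "S = {(q,s). q \<in> \<rat> \<and> s \<in> \<rat> \<and> 0 < s \<and> emeasure M (ball q s) = 0}"
  have "countable S"
    by (rule countable_subset[of _ "\<rat> \<times> \<rat>"]) (auto simp: S_def countable_rat)
  then have null: "(\<Union>p\<in>S. ball (fst p) (snd p)) \<in> null_sets M"
    by (rule null_sets_UN') (use assms in \<open>auto simp: S_def null_sets_def\<close>)
  show ?thesis
  proof (rule AE_I'[OF null], rule subsetI)
    fix x assume "x \<in> {x \<in> space M. x \<notin> msupport M}"
    then obtain e where e: "e > 0" "emeasure M (ball x e) = 0"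
      unfolding msupport_def by (auto simp: not_gr_zero)
    obtain q where q: "q \<in> \<rat>" "x - e/3 < q" "q < x + e/3"
      using Rats_dense_in_real[of "x - e/3" "x + e/3"] e by auto
    obtain s where s: "s \<in> \<rat>" "e/3 < s" "s < 2*e/3"
      using Rats_dense_in_real[of "e/3" "2*e/3"] e by auto
    have "ball q s \<subseteq> ball x e"
      using q s by (auto simp: dist_real_def)
    then have "emeasure M (ball q s) \<le> emeasure M (ball x e)"
      by (rule emeasure_mono) (use assms in simp)
    then have "(q,s) \<in> S" unfolding S_def using q s e by auto
    moreover have "x \<in> ball q s" using q s by (auto simp: dist_real_def)
    ultimately show "x \<in> (\<Union>p\<in>S. ball (fst p) (snd p))" by force
  qed
qed

lemma on_domain_commute:
  assumes "on_domain a b c \<mu> \<nu>"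
  shows "on_domain a b c \<nu> \<mu>"
proof -
  have "0 \<le> contestP a b c y x \<and> contestP a b c y x \<le> 1 \<longleftrightarrow>
      0 \<le> contestP a b c x y \<and> contestP a b c x y \<le> 1" for x y
    using contestP_swap[of a b c y x] by linarith
  then show ?thesis using assms unfolding on_domain_def by blast
qed

lemma on_domain_AE:
  assumes "mixed_strategy \<mu>" "mixed_strategy \<nu>" "on_domain a b c \<mu> \<nu>"
  shows "AE x in \<mu>. AE y in \<nu>. 0 \<le> contestP a b c x y \<and> contestP a b c x y \<le> 1"
  using AE_in_msupport[OF mixed_strategy_sets[OF assms(1)]]
proof eventually_elim
  case (elim x)
  show ?case using AE_in_msupport[OF mixed_strategy_sets[OF assms(2)]]
    by eventually_elim (use assms(3) elim in \<open>auto simp: on_domain_def\<close>)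
qed

text \<open>On the domain the expected win probability against \<open>\<rho>\<close> depends on \<open>\<rho>\<close> only through
  its first two moments, so the gain of a pure effort over \<open>self_payoff\<close> is a quadratic.\<close>
definition gap_poly :: "real \<Rightarrow> real \<Rightarrow> real \<Rightarrow> real \<Rightarrow> real measure \<Rightarrow> real \<Rightarrow> real" where
  "gap_poly a b c \<theta> \<rho> x =
     (a * (\<integral>w. w \<partial>\<rho>) - b) * x\<^sup>2 + (c - \<theta> - a * (\<integral>w. w\<^sup>2 \<partial>\<rho>)) * x
       + (b * (\<integral>w. w\<^sup>2 \<partial>\<rho>) - (c - \<theta>) * (\<integral>w. w \<partial>\<rho>))"

lemma integral_contestP:
  assumes "mixed_strategy \<nu>"
  shows "integrable \<nu> (contestP a b c x)"
    and "(\<integral>y. contestP a b c x y \<partial>\<nu>) - \<theta> * x = self_payoff \<theta> \<nu> + gap_poly a b c \<theta> \<nu> x"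
proof -
  interpret prob_space \<nu> using assms mixed_strategy_prob_space by blast
  note moments = mixed_strategy_integrable_id[OF assms] mixed_strategy_integrable_square[OF assms]
  have "integrable \<nu> (\<lambda>y. (1/2 + c*x - b*x\<^sup>2) + (a*x\<^sup>2 - c) * y + (b - a*x) * y\<^sup>2)"
    using moments by auto
  then show "integrable \<nu> (contestP a b c x)"
    by (simp add: contestP_poly_snd[abs_def])
  have "(\<integral>y. contestP a b c x y \<partial>\<nu>) =
      (1/2 + c*x - b*x\<^sup>2) + (a*x\<^sup>2 - c) * (\<integral>y. y \<partial>\<nu>) + (b - a*x) * (\<integral>y. y\<^sup>2 \<partial>\<nu>)"
    unfolding contestP_poly_snd using moments by (simp add: prob_space)
  then show "(\<integral>y. contestP a b c x y \<partial>\<nu>) - \<theta> * x = self_payoff \<theta> \<nu> + gap_poly a b c \<theta> \<nu> x"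
    unfolding self_payoff_def gap_poly_def by (simp add: algebra_simps)
qed

lemma pure_payoff_eq_gap_poly:
  assumes "mixed_strategy \<nu>" "AE y in \<nu>. 0 \<le> contestP a b c x y \<and> contestP a b c x y \<le> 1"
  shows "pure_payoff a b c \<theta> \<nu> x = self_payoff \<theta> \<nu> + gap_poly a b c \<theta> \<nu> x"
proof -
  have "(\<integral>y. contestPbar a b c x y \<partial>\<nu>) = (\<integral>y. contestP a b c x y \<partial>\<nu>)"
  proof (rule integral_cong_AE)
    show "contestPbar a b c x \<in> borel_measurable \<nu>"
      by (rule mixed_strategy_measurable[OF assms(1) borel_measurable_contestPbar(3)])
    show "contestP a b c x \<in> borel_measurable \<nu>"
      by (rule mixed_strategy_measurable[OF assms(1)]) (unfold contestP_def, measurable)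
    show "AE y in \<nu>. contestPbar a b c x y = contestP a b c x y"
      using assms(2) by (rule AE_mp) (auto simp: contestPbar_eq_contestP)
  qed
  then show ?thesis
    unfolding pure_payoff_def using integral_contestP(2)[OF assms(1)] by simp
qed

lemma on_domain_AE_gap_poly_eq_0:
  assumes "mixed_strategy \<mu>" "mixed_strategy \<nu>" "on_domain a b c \<mu> \<nu>"
    and "AE x in \<mu>. pure_payoff a b c \<theta> \<nu> x = self_payoff \<theta> \<nu>"
  shows "AE x in \<mu>. gap_poly a b c \<theta> \<nu> x = 0"
  using on_domain_AE[OF assms(1-3)] assms(4)
  by eventually_elim (use pure_payoff_eq_gap_poly[OF assms(2)] in auto)

section \<open>Moment equations and finite supports\<close>

text \<open>Each summand secures one of the estimates of \<open>contestP_deviation_le_one\<close> and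
  \<open>contestP_deviation_le_minus_one\<close> for the deviation \<open>x = 1/s\<close> in a contest with \<open>a = s\<^sup>2\<close>.\<close>
definition deviation_threshold :: "real \<Rightarrow> real \<Rightarrow> real \<Rightarrow> real" where
  "deviation_threshold b c \<theta> = b + b/c + (2*c + 2) + 4/((c-\<theta>)/b) + 12/((c-\<theta>)/b)\<^sup>2"

lemma deviation_threshold_pos: "b > 0 \<Longrightarrow> c > 0 \<Longrightarrow> \<theta> < c \<Longrightarrow> deviation_threshold b c \<theta> > 0"
  unfolding deviation_threshold_def
  by (intro add_pos_pos add_pos_nonneg) (auto intro!: divide_nonneg_pos)

lemma deviation_threshold_bounds:
  fixes b c \<theta> s :: real
  assumes b: "b > 0" and c: "c > 0" and \<theta>: "\<theta> < c" and s: "s \<ge> deviation_threshold b c \<theta>"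
  defines "K \<equiv> (c - \<theta>) / b"
  shows "b + 12/K\<^sup>2 \<le> s" "b \<le> s" "b/c \<le> s" "2*c + 2 \<le> s" "4/K \<le> s"
proof -
  have "0 < K" unfolding K_def using b \<theta> by simp
  then have "0 \<le> b/c" "0 < 4/K" "0 < 12/K\<^sup>2" using b c by auto
  then show "b + 12/K\<^sup>2 \<le> s" "b \<le> s" "b/c \<le> s" "2*c + 2 \<le> s" "4/K \<le> s"
    using s b c unfolding deviation_threshold_def K_def[symmetric] by linarith+
qed

lemma contestP_inverse_effort:
  "s > 0 \<Longrightarrow> contestP (s\<^sup>2) b c (1/s) y = 1/2 + (1/s - y) * (c - b/s + y*(s - b))"
  by (simp add: contestP_def field_simps power2_eq_square)

lemma contestP_deviation_le_one:
  fixes b c \<theta> s y :: real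
  assumes b: "b > 0" and c: "c > 0" and \<theta>: "\<theta> < c"
    and s: "s \<ge> deviation_threshold b c \<theta>" and y: "0 \<le> y"
  shows "contestP (s\<^sup>2) b c (1/s) y \<le> 1"
proof -
  note bounds = deviation_threshold_bounds[OF b c \<theta> s]
  have s0: "s > 0" using bounds(4) c by linarith
  define g where "g = c - b/s + y*(s-b)"
  have P: "contestP (s\<^sup>2) b c (1/s) y = 1/2 + (1/s - y) * g"
    unfolding g_def by (rule contestP_inverse_effort[OF s0])
  have "b/s \<le> b/(b/c)" using bounds(3) b c s0 by (intro divide_left_mono) auto
  then have g0: "0 \<le> g" unfolding g_def using b y bounds(2) by (simp add: add_nonneg_nonneg)
  show ?thesis
  proof (cases "y \<le> 1/s")
    case True
    have "y * (s - b) \<le> (1/s) * s" using True y bounds(2) s0 b by (intro mult_mono) auto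
    moreover have "0 \<le> b/s" using b s0 by simp
    ultimately have "g \<le> c + 1" unfolding g_def using s0 by simp
    then have "(1/s - y) * g \<le> (1/s) * (c + 1)"
      using True y g0 s0 by (intro mult_mono) auto
    also have "\<dots> \<le> 1/2"
      using bounds(4) s0 c by (simp add: field_simps)
    finally show ?thesis unfolding P by linarith
  next
    case False
    then have "(1/s - y) * g \<le> 0" using g0 by (simp add: mult_nonpos_nonneg)
    then show ?thesis unfolding P by linarith
  qed
qed

lemma contestP_deviation_le_minus_one:
  fixes b c \<theta> s y :: real
  assumes b: "b > 0" and c: "c > 0" and \<theta>: "\<theta> < c"
    and s: "s \<ge> deviation_threshold b c \<theta>" and y: "(c - \<theta>) / (2*b) \<le> y"
  shows "contestP (s\<^sup>2) b c (1/s) y \<le> -1"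
proof -
  define K where "K = (c - \<theta>) / b"
  note bounds = deviation_threshold_bounds[OF b c \<theta> s, folded K_def]
  have K0: "K > 0" unfolding K_def using b \<theta> by simp
  have s0: "s > 0" using bounds(4) c by linarith
  have yK: "K/2 \<le> y" using y unfolding K_def by simp
  define g where "g = c - b/s + y*(s-b)"
  have P: "contestP (s\<^sup>2) b c (1/s) y = 1/2 + (1/s - y) * g"
    unfolding g_def by (rule contestP_inverse_effort[OF s0])
  have "b/s \<le> b/(b/c)" using bounds(3) b c s0 by (intro divide_left_mono) auto
  then have "0 \<le> c - b/s" using b by simp
  then have "(K/2) * (s-b) \<le> g"
    using mult_right_mono[OF yK, of "s - b"] bounds(2) unfolding g_def by simp
  moreover have "1/s \<le> K/4" using bounds(5) s0 K0 by (simp add: field_simps)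
  then have "K/4 \<le> y - 1/s" using yK by simp
  ultimately have "(K/4) * ((K/2) * (s - b)) \<le> (y - 1/s) * g"
    using bounds(2) K0 by (intro mult_mono) auto
  moreover have "12 \<le> K\<^sup>2 * (s - b)"
    using mult_left_mono[of "12/K\<^sup>2" "s - b" "K\<^sup>2"] bounds(1) K0 by simp
  then have "3/2 \<le> (K/4) * ((K/2) * (s - b))"
    by (simp add: power2_eq_square algebra_simps)
  ultimately have "3/2 \<le> (y - 1/s) * g" by linarith
  then show ?thesis unfolding P by (simp add: algebra_simps)
qed

lemma mixed_strategy_measure_tail_pos:
  assumes "mixed_strategy \<rho>" "t * (\<integral>w. w \<partial>\<rho>) < (\<integral>w. w\<^sup>2 \<partial>\<rho>)"
  shows "measure \<rho> {t..} > 0"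
proof (rule ccontr)
  interpret prob_space \<rho> using assms(1) mixed_strategy_prob_space by blast
  assume "\<not> measure \<rho> {t..} > 0"
  then have "{t..} \<in> null_sets \<rho>"
    using mixed_strategy_sets[OF assms(1)] measure_nonneg[of \<rho> "{t..}"]
    by (simp add: null_sets_def emeasure_eq_measure)
  then have "AE y in \<rho>. y < t"
    by (rule AE_I') auto
  then have "AE y in \<rho>. y\<^sup>2 \<le> t * y"
    using mixed_strategy_nonneg[OF assms(1)]
    by eventually_elim (simp add: power2_eq_square mult_right_mono)
  then have "(\<integral>w. w\<^sup>2 \<partial>\<rho>) \<le> (\<integral>w. t * w \<partial>\<rho>)"
    by (rule integral_mono_AE[rotated 2])
      (use mixed_strategy_integrable_square[OF assms(1)] mixed_strategy_integrable_id[OF assms(1)] in auto)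
  then show False using assms(2) by simp
qed

text \<open>If the moments make \<open>gap_poly\<close> vanish identically, the small effort \<open>1/sqrt a\<close> earns
  \<open>self_payoff\<close> before clipping, and clipping \<open>contestP \<le> -1\<close> to \<open>0\<close> on a tail of positive
  mass adds that mass.\<close>
lemma exploitable_if_moment_equations:
  fixes a b c \<theta> :: real
  assumes b: "b > 0" and c: "c > 0" and \<theta>: "0 < \<theta>" "\<theta> < c"
    and a: "a \<ge> (deviation_threshold b c \<theta>)\<^sup>2" and \<rho>: "mixed_strategy \<rho>"
    and m1: "a * (\<integral>w. w \<partial>\<rho>) = b" and m2: "a * (\<integral>w. w\<^sup>2 \<partial>\<rho>) = c - \<theta>"
  shows "\<not> unexploitable a b c \<theta> \<rho>"
proof
  assume unexp: "unexploitable a b c \<theta> \<rho>"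
  interpret prob_space \<rho> using \<rho> mixed_strategy_prob_space by blast
  define s where "s = sqrt a"
  have t0: "deviation_threshold b c \<theta> > 0" using deviation_threshold_pos b c \<theta> by blast
  then have a0: "a > 0" using a by (smt (verit) zero_less_power2)
  have s: "s \<ge> deviation_threshold b c \<theta>" unfolding s_def using a t0 real_le_rsqrt by blast
  have as: "a = s\<^sup>2" and s0: "s > 0" unfolding s_def using a0 by simp_all
  define A where "A = {(c - \<theta>) / (2*b)..}"
  have A: "A \<in> sets \<rho>" unfolding A_def using mixed_strategy_sets[OF \<rho>] by simp
  have moments: "(\<integral>w. w \<partial>\<rho>) = b/a" "(\<integral>w. w\<^sup>2 \<partial>\<rho>) = (c - \<theta>)/a"
    using m1 m2 a0 by (simp_all add: field_simps)
  moreover have "(c - \<theta>) / (2*b) * (b/a) < (c - \<theta>)/a"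
    using a0 b \<theta> by (simp add: field_simps)
  ultimately have "(c - \<theta>) / (2*b) * (\<integral>w. w \<partial>\<rho>) < (\<integral>w. w\<^sup>2 \<partial>\<rho>)"
    by simp
  then have pos: "measure \<rho> A > 0"
    unfolding A_def by (rule mixed_strategy_measure_tail_pos[OF \<rho>])
  define z where "z = 1/s"
  have z0: "0 \<le> z" unfolding z_def using s0 by simp
  have "AE y in \<rho>. contestP a b c z y + indicator A y \<le> contestPbar a b c z y"
    using mixed_strategy_nonneg[OF \<rho>]
  proof eventually_elim
    case (elim y)
    show ?case
      using contestP_deviation_le_one[OF b c \<theta>(2) s elim]
        contestP_deviation_le_minus_one[OF b c \<theta>(2) s, of y]
      unfolding as z_def[symmetric] by (cases "y \<in> A") (auto simp: contestPbar_def A_def)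
  qed
  then have "(\<integral>y. contestP a b c z y + indicator A y \<partial>\<rho>) \<le> (\<integral>y. contestPbar a b c z y \<partial>\<rho>)"
    by (rule integral_mono_AE[rotated 2])
      (use integral_contestP(1)[OF \<rho>] integrable_contestPbar[OF \<rho>] A in
        \<open>auto simp: emeasure_eq_measure\<close>)
  moreover have "(\<integral>y. contestP a b c z y + indicator A y \<partial>\<rho>) = (\<integral>y. contestP a b c z y \<partial>\<rho>) + measure \<rho> A"
    using integral_contestP(1)[OF \<rho>] A by (simp add: emeasure_eq_measure)
  moreover have "gap_poly a b c \<theta> \<rho> z = 0"
    unfolding gap_poly_def moments using a0 by simp
  ultimately have "self_payoff \<theta> \<rho> + measure \<rho> A \<le> pure_payoff a b c \<theta> \<rho> z"
    using integral_contestP(2)[OF \<rho>, of a b c z \<theta>] unfolding pure_payoff_def by linarith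
  then show False using unexp z0 pos unfolding unexploitable_def by force
qed

lemma quadratic_roots_at_most_two:
  fixes \<alpha> \<beta> \<gamma> :: real
  assumes "\<alpha> \<noteq> 0 \<or> \<beta> \<noteq> 0"
  shows "\<exists>r1 r2. \<forall>x. \<alpha>*x\<^sup>2 + \<beta>*x + \<gamma> = 0 \<longrightarrow> x = r1 \<or> x = r2"
proof (cases "\<exists>r. \<alpha>*r\<^sup>2 + \<beta>*r + \<gamma> = 0")
  case True
  then obtain r where r: "\<alpha>*r\<^sup>2 + \<beta>*r + \<gamma> = 0" by blast
  have factor: "\<alpha>*x\<^sup>2 + \<beta>*x + \<gamma> = (x - r) * (\<alpha>*(x + r) + \<beta>)" for x
    using r by (simp add: algebra_simps power2_eq_square)
  show ?thesis
  proof (intro exI allI impI)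
    fix x assume "\<alpha>*x\<^sup>2 + \<beta>*x + \<gamma> = 0"
    then have "x = r \<or> \<alpha>*(x + r) + \<beta> = 0" by (simp add: factor)
    then show "x = r \<or> x = (if \<alpha> = 0 then r else -(\<alpha>*r + \<beta>)/\<alpha>)"
      using assms by (auto simp: field_simps)
  qed
qed auto

lemma two_point_support_if_AE_gap_poly_eq_0:
  fixes a b c \<theta> :: real
  assumes b: "b > 0" and c: "c > 0" and \<theta>: "0 < \<theta>" "\<theta> < c"
    and a: "a \<ge> (deviation_threshold b c \<theta>)\<^sup>2" and \<nu>: "mixed_strategy \<nu>"
    and unexp: "unexploitable a b c \<theta> \<nu>" and gap: "AE x in \<mu>. gap_poly a b c \<theta> \<nu> x = 0"
  shows "\<exists>r1 r2. AE x in \<mu>. x = r1 \<or> x = r2"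
proof -
  have "a * (\<integral>w. w \<partial>\<nu>) - b \<noteq> 0 \<or> c - \<theta> - a * (\<integral>w. w\<^sup>2 \<partial>\<nu>) \<noteq> 0"
    using exploitable_if_moment_equations[OF b c \<theta> a \<nu>] unexp by auto
  from quadratic_roots_at_most_two[OF this]
  obtain r1 r2 where "\<forall>x. gap_poly a b c \<theta> \<nu> x = 0 \<longrightarrow> x = r1 \<or> x = r2"
    unfolding gap_poly_def by blast
  with gap have "AE x in \<mu>. x = r1 \<or> x = r2" by (auto elim: AE_mp)
  then show ?thesis by blast
qed

lemma AE_atom:
  assumes "AE x in M. P x" "measure M {y} \<noteq> 0"
  shows "P y"
proof (rule ccontr)
  assume "\<not> P y"
  from assms(1) obtain N where N: "{x \<in> space M. \<not> P x} \<subseteq> N" "emeasure M N = 0" "N \<in> sets M"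
    by (rule AE_E)
  have "{y} \<in> sets M" using assms(2) measure_notin_sets by blast
  then have "y \<in> N" using N(1) \<open>\<not> P y\<close> sets.sets_into_space by blast
  then have "emeasure M {y} = 0"
    using N(2,3) emeasure_mono[of "{y}" N M] by simp
  then show False using assms(2) by (simp add: measure_def)
qed

lemma integral_two_point:
  fixes M :: "real measure"
  assumes "finite_measure M" "sets M = sets borel" "AE x in M. x = r1 \<or> x = r2" "r1 \<noteq> r2"
    and "f \<in> borel_measurable borel"
  shows "(\<integral>x. f x \<partial>M) = measure M {r1} * f r1 + measure M {r2} * f r2"
proof -
  interpret finite_measure M by fact
  have singleton: "{r} \<in> sets M" for r using assms(2) by simp
  have "(\<integral>x. f x \<partial>M) = (\<integral>x. f r1 * indicator {r1} x + f r2 * indicator {r2} x \<partial>M)"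
  proof (rule integral_cong_AE)
    show "f \<in> borel_measurable M" using assms(5) measurable_cong_sets[OF assms(2) refl] by blast
    show "(\<lambda>x. f r1 * indicator {r1} x + f r2 * indicator {r2} x) \<in> borel_measurable M"
      using singleton by measurable
    show "AE x in M. f x = f r1 * indicator {r1} x + f r2 * indicator {r2} x"
      using assms(3) by eventually_elim (use assms(4) in auto)
  qed
  also have "\<dots> = measure M {r1} * f r1 + measure M {r2} * f r2"
    using singleton by (simp add: emeasure_eq_measure)
  finally show ?thesis .
qed

lemma nondegenerate_two_point_distribution:
  assumes "prob_space M" "sets M = sets borel" "AE x in M. x = r1 \<or> x = r2" "nondegenerate M"
  obtains y1 y2 :: real where "y1 < y2" "measure M {y1} > 0" "measure M {y2} > 0"
    "measure M {y1} + measure M {y2} = 1"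
    "\<And>f. f \<in> borel_measurable borel \<Longrightarrow> (\<integral>x. f x \<partial>M) = measure M {y1} * f y1 + measure M {y2} * f y2"
proof -
  interpret prob_space M by fact
  have pos: "measure M {r} > 0" if "AE x in M. x = r \<or> x = r'" for r r'
  proof (rule ccontr)
    assume "\<not> measure M {r} > 0"
    then have "{r} \<in> null_sets M"
      using assms(2) measure_nonneg[of M "{r}"] by (simp add: null_sets_def emeasure_eq_measure)
    then have "AE x in M. x \<noteq> r" by (rule AE_I') auto
    with that have "AE x in M. x = r'" by eventually_elim auto
    then show False using assms(4) unfolding nondegenerate_def by blast
  qed
  have ne: "r1 \<noteq> r2" using assms(3,4) unfolding nondegenerate_def by auto
  note integral = integral_two_point[OF finite_measure_axioms assms(2,3) ne]
  have "AE x in M. x = r2 \<or> x = r1" using assms(3) by eventually_elim auto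
  then have pos12: "measure M {r1} > 0" "measure M {r2} > 0" using pos[OF assms(3)] pos by blast+
  have sum: "measure M {r1} + measure M {r2} = 1" using integral[of "\<lambda>_. 1"] by (simp add: prob_space)
  show ?thesis
  proof (cases "r1 < r2")
    case True
    then show ?thesis using that pos12 sum integral by blast
  next
    case False
    then have "r2 < r1" using ne by simp
    then show ?thesis using that[of r2 r1] pos12 sum integral by (simp add: add.commute)
  qed
qed

section \<open>Two-point strategies\<close>

lemma abs_linear_quadratic_le:
  fixes e d f r :: real
  assumes "\<bar>e\<bar> \<le> 1" "\<bar>e\<bar> \<le> r / (\<bar>d\<bar> + \<bar>f\<bar> + 1)" "0 \<le> r"
  shows "\<bar>e*d + e\<^sup>2*f\<bar> \<le> r"
proof -
  have "e\<^sup>2 \<le> \<bar>e\<bar>"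
    using mult_left_le_one_le[of "\<bar>e\<bar>" "\<bar>e\<bar>"] assms(1) by (simp add: power2_eq_square abs_mult_self_eq)
  then have "\<bar>e*d + e\<^sup>2*f\<bar> \<le> \<bar>e\<bar> * (\<bar>d\<bar> + \<bar>f\<bar>)"
    using abs_triangle_ineq[of "e*d" "e\<^sup>2*f"] mult_right_mono[of "e\<^sup>2" "\<bar>e\<bar>" "\<bar>f\<bar>"]
    by (simp add: abs_mult algebra_simps)
  also have "\<dots> \<le> r / (\<bar>d\<bar> + \<bar>f\<bar> + 1) * (\<bar>d\<bar> + \<bar>f\<bar>)"
    using assms(2) by (intro mult_right_mono) auto
  also have "\<dots> \<le> r"
    using assms(3) by (simp add: field_simps)
  finally show ?thesis .
qed

lemma slope_nonpos_if_perturbations_nonpos: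
  fixes D \<alpha> \<epsilon>\<^sub>0 :: real
  assumes "0 < \<epsilon>\<^sub>0" "\<And>\<epsilon>. 0 < \<epsilon> \<Longrightarrow> \<epsilon> \<le> \<epsilon>\<^sub>0 \<Longrightarrow> \<epsilon> * D + \<epsilon>\<^sup>2 * \<alpha> \<le> 0"
  shows "D \<le> 0"
proof (rule ccontr)
  assume "\<not> D \<le> 0"
  define \<epsilon> where "\<epsilon> = min \<epsilon>\<^sub>0 (D / (\<bar>\<alpha>\<bar> + 1))"
  have \<epsilon>: "0 < \<epsilon>" "\<epsilon> \<le> \<epsilon>\<^sub>0" using assms(1) \<open>\<not> D \<le> 0\<close> by (auto simp: \<epsilon>_def)
  have "\<epsilon> * \<bar>\<alpha>\<bar> \<le> D / (\<bar>\<alpha>\<bar> + 1) * \<bar>\<alpha>\<bar>" unfolding \<epsilon>_def by (intro mult_right_mono) auto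
  also have "\<dots> < D" using \<open>\<not> D \<le> 0\<close> by (simp add: field_simps)
  finally have "0 < \<epsilon> * (D - \<epsilon> * \<bar>\<alpha>\<bar>)" using \<epsilon> by simp
  also have "\<dots> \<le> \<epsilon> * D + \<epsilon>\<^sup>2 * \<alpha>"
  proof -
    have "-\<bar>\<alpha>\<bar> \<le> \<alpha>" by simp
    then have "-(\<epsilon>\<^sup>2 * \<bar>\<alpha>\<bar>) \<le> \<epsilon>\<^sup>2 * \<alpha>" using mult_left_mono[of "-\<bar>\<alpha>\<bar>" \<alpha> "\<epsilon>\<^sup>2"] by simp
    then show ?thesis by (simp add: power2_eq_square algebra_simps)
  qed
  finally show False using assms(2)[OF \<epsilon>] by simp
qed

lemma diagonal_slope_lower_bound:
  fixes a b c \<theta> y :: real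
  assumes b: "b > 0" and \<theta>: "\<theta> < c" and a: "a \<ge> 2*b\<^sup>2/(c-\<theta>)"
  shows "c - 2*b*y + a*y\<^sup>2 \<ge> (c+\<theta>)/2"
proof -
  have a0: "a > 0" using a b \<theta> by (smt (verit) divide_pos_pos zero_less_power)
  have "0 \<le> a * (y - b/a)\<^sup>2" using a0 by simp
  also have "\<dots> = a*y\<^sup>2 - 2*b*y + b\<^sup>2/a" using a0 by (simp add: power2_eq_square field_simps)
  finally have "0 \<le> a*y\<^sup>2 - 2*b*y + b\<^sup>2/a" .
  moreover have "b\<^sup>2/a \<le> (c-\<theta>)/2"
    using a a0 \<theta> by (simp add: field_simps)
  ultimately show ?thesis by argo
qed

lemma deviation_error_bound:
  fixes a b \<theta> t e :: real
  assumes b: "b > 0" and \<theta>: "\<theta> > 0" and a: "a \<ge> 1" and t: "1/2 \<le> \<theta> * t" and e: "e = 1 / (a * t\<^sup>2)"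
  shows "2*b*(t*e) + b*e\<^sup>2 + \<theta>*e \<le> (4*\<theta>^3 + 4*b*\<theta> + 16*b*\<theta>^4) / a"
proof -
  have "0 < \<theta> * t" using t by linarith
  then have t0: "t > 0" using \<theta> zero_less_mult_pos by blast
  have inv_t: "0 < 1/t" "1/t \<le> 2*\<theta>" using t t0 by (auto simp: field_simps)
  have a0: "a > 0" using a by simp
  have e0: "e > 0" unfolding e using a0 t0 by simp
  have B1: "t * e \<le> 2*\<theta>/a"
    using divide_right_mono[OF inv_t(2), of a] a0 t0 unfolding e by (simp add: power2_eq_square field_simps)
  have B2: "e \<le> 4*\<theta>\<^sup>2/a"
    using divide_right_mono[OF power_mono[OF inv_t(2), of 2], of a] inv_t a0 t0
    unfolding e by (simp add: power2_eq_square field_simps)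
  have "e\<^sup>2 \<le> (4*\<theta>\<^sup>2/a)\<^sup>2" using B2 e0 by (intro power_mono) auto
  also have "\<dots> = (16*\<theta>^4/a) * (1/a)" by (simp add: power2_eq_square power4_eq_xxxx field_simps)
  also have "\<dots> \<le> 16*\<theta>^4/a" using a a0 \<theta> by (simp add: field_simps)
  finally have B3: "e\<^sup>2 \<le> 16*\<theta>^4/a" .
  have "2*b*(t*e) + b*e\<^sup>2 + \<theta>*e \<le> 2*b*(2*\<theta>/a) + b*(16*\<theta>^4/a) + \<theta>*(4*\<theta>\<^sup>2/a)"
    using mult_left_mono[OF B1, of "2*b"] mult_left_mono[OF B3, of b] mult_left_mono[OF B2, of \<theta>] b \<theta>
    by simp
  also have "\<dots> = (4*\<theta>^3 + 4*b*\<theta> + 16*b*\<theta>^4) / a"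
    using a0 by (simp add: field_simps power2_eq_square power3_eq_cube)
  finally show ?thesis .
qed

text \<open>The summands give \<open>a \<ge> 1\<close>, make \<open>diagonal_slope_lower_bound\<close> applicable, and dominate
  the second-order terms estimated in \<open>deviation_error_bound\<close>.\<close>
definition two_atom_threshold :: "real \<Rightarrow> real \<Rightarrow> real \<Rightarrow> real" where
  "two_atom_threshold b c \<theta> =
     1 + 2*b\<^sup>2/(c-\<theta>) + 2*(4*\<theta>^3 + 4*b*\<theta> + 16*b*\<theta>^4)*(c+\<theta>)/(c-\<theta>)"

lemma two_atom_threshold_nonneg: "b > 0 \<Longrightarrow> 0 < \<theta> \<Longrightarrow> \<theta> < c \<Longrightarrow> 0 \<le> two_atom_threshold b c \<theta>"
  unfolding two_atom_threshold_def by simp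

context
  fixes a b c \<theta> y1 y2 q1 q2 M :: real and G :: "real \<Rightarrow> real"
  assumes b: "b > 0" and \<theta>: "0 < \<theta>" "\<theta> < c"
    and y: "0 \<le> y1" "y1 < y2" and q: "0 < q1" "0 < q2" "q1 + q2 = 1"
    and G: "\<And>z. G z = q1 * contestPbar a b c z y1 + q2 * contestPbar a b c z y2 - \<theta> * z"
    and G_le: "\<And>z. 0 \<le> z \<Longrightarrow> G z \<le> M" and G_y1: "G y1 = M" and G_y2: "G y2 = M"
begin

lemma two_atoms_not_contestP_ge_one: "\<not> 1 \<le> contestP a b c y1 y2"
proof
  assume "1 \<le> contestP a b c y1 y2"
  then have "contestPbar a b c y1 y2 = 1" "contestPbar a b c y2 y1 = 0"
    using contestPbar_eq_one contestPbar_swap[of a b c y2 y1] by auto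
  then have "q1/2 + q2 - \<theta> * y1 = M" "q2/2 - \<theta> * y2 = M"
    using G_y1 G_y2 G[of y1] G[of y2] by (simp_all add: contestPbar_diag)
  moreover have "\<theta> * y1 < \<theta> * y2" using \<theta> y by simp
  ultimately show False using q by argo
qed

lemma two_atoms_indifference_if_contestP_le_zero:
  assumes "contestP a b c y1 y2 \<le> 0"
  shows "M = q1/2 - \<theta> * y1" and "M = q1 + q2/2 - \<theta> * y2"
proof -
  have "contestPbar a b c y1 y2 = 0" "contestPbar a b c y2 y1 = 1"
    using contestPbar_eq_zero[OF assms] contestPbar_swap[of a b c y2 y1] by auto
  then show "M = q1/2 - \<theta> * y1" "M = q1 + q2/2 - \<theta> * y2"
    using G_y1 G_y2 G[of y1] G[of y2] by (simp_all add: contestPbar_diag)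
qed

lemma two_atoms_first_order_condition:
  assumes "contestP a b c y1 y2 \<le> 0"
  shows "q1 * (c - 2*b*y1 + a*y1\<^sup>2) - \<theta> \<le> 0"
proof (rule slope_nonpos_if_perturbations_nonpos)
  define g where "g = c - 2*b*y1 + a*y1\<^sup>2"
  define f where "f = a*y1 - b"
  have shift: "contestP a b c (y1 + \<epsilon>) y1 = 1/2 + (\<epsilon>*g + \<epsilon>\<^sup>2*f)" for \<epsilon>
    using contestP_shift_fst[of a b c y1 \<epsilon> y1] unfolding g_def f_def
    by (simp add: contestP_diag power2_eq_square algebra_simps)
  note M = two_atoms_indifference_if_contestP_le_zero(1)[OF assms]
  define \<epsilon>\<^sub>0 where "\<epsilon>\<^sub>0 = min 1 ((1/2) / (\<bar>g\<bar> + \<bar>f\<bar> + 1))"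
  show "0 < \<epsilon>\<^sub>0" unfolding \<epsilon>\<^sub>0_def by (simp add: add_pos_nonneg)
  fix \<epsilon> :: real
  assume \<epsilon>: "0 < \<epsilon>" "\<epsilon> \<le> \<epsilon>\<^sub>0"
  have "\<bar>\<epsilon>\<bar> \<le> 1" "\<bar>\<epsilon>\<bar> \<le> (1/2) / (\<bar>g\<bar> + \<bar>f\<bar> + 1)"
    using \<epsilon> unfolding \<epsilon>\<^sub>0_def min.bounded_iff by simp_all
  then have "\<bar>\<epsilon>*g + \<epsilon>\<^sup>2*f\<bar> \<le> 1/2"
    by (rule abs_linear_quadratic_le) simp
  then have "contestP a b c (y1 + \<epsilon>) y1 \<le> 1"
    using shift[of \<epsilon>] abs_ge_self[of "\<epsilon>*g + \<epsilon>\<^sup>2*f"] by linarith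
  then have "contestP a b c (y1 + \<epsilon>) y1 \<le> contestPbar a b c (y1 + \<epsilon>) y1"
    using min_one_contestP_le_contestPbar[of a b c "y1 + \<epsilon>" y1] by (simp add: min.absorb2)
  then have "q1 * contestP a b c (y1 + \<epsilon>) y1 \<le> q1 * contestPbar a b c (y1 + \<epsilon>) y1"
    using q by (simp add: mult_left_mono)
  moreover have "0 \<le> q2 * contestPbar a b c (y1 + \<epsilon>) y2" using contestPbar_nonneg q by simp
  ultimately have "q1 * contestP a b c (y1 + \<epsilon>) y1 - \<theta> * (y1 + \<epsilon>) \<le> G (y1 + \<epsilon>)"
    using G[of "y1 + \<epsilon>"] by linarith
  also have "\<dots> \<le> M" using G_le \<epsilon> y by simp
  finally show "\<epsilon> * (q1 * g - \<theta>) + \<epsilon>\<^sup>2 * (q1 * f) \<le> 0"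
    unfolding shift M by (simp add: algebra_simps)
qed

lemma two_atoms_upper_weight:
  assumes "contestP a b c y1 y2 \<le> 0" and "a \<ge> 2*b\<^sup>2/(c-\<theta>)"
  shows "(c - \<theta>) / (c + \<theta>) \<le> q2"
proof -
  have "q1 * ((c+\<theta>)/2) \<le> q1 * (c - 2*b*y1 + a*y1\<^sup>2)"
    using diagonal_slope_lower_bound[OF b \<theta>(2) assms(2)] q by (intro mult_left_mono) auto
  then have "q1 * (c+\<theta>) \<le> 2*\<theta>" using two_atoms_first_order_condition[OF assms(1)] by simp
  moreover have "q2 = 1 - q1" using q(3) by simp
  then have "q2 * (c+\<theta>) = (c+\<theta>) - q1 * (c+\<theta>)" by (simp add: left_diff_distrib)
  ultimately have "q2 * (c+\<theta>) \<ge> c - \<theta>" by linarith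
  then show ?thesis using \<theta> by (simp add: field_simps)
qed

lemma two_atoms_not_contestP_le_zero:
  assumes a: "a \<ge> two_atom_threshold b c \<theta>"
  shows "\<not> contestP a b c y1 y2 \<le> 0"
proof
  assume h: "contestP a b c y1 y2 \<le> 0"
  define W where "W = 4*\<theta>^3 + 4*b*\<theta> + 16*b*\<theta>^4"
  have "0 \<le> W" using b \<theta> unfolding W_def by simp
  then have "0 \<le> 2*b\<^sup>2/(c-\<theta>)" "0 \<le> 2*W*(c+\<theta>)/(c-\<theta>)"
    using \<theta> by (auto intro!: divide_nonneg_pos)
  then have a1: "a \<ge> 1" and a2: "a \<ge> 2*b\<^sup>2/(c-\<theta>)" and a3: "a > 2*W*(c+\<theta>)/(c-\<theta>)"
    using a unfolding two_atom_threshold_def W_def[symmetric] by linarith+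
  note M = two_atoms_indifference_if_contestP_le_zero[OF h]
  define t e L where "t = y2" and "e = 1/(a*t\<^sup>2)" and "L = 2*b*(t*e) + b*e\<^sup>2"
  have "0 \<le> \<theta> * y1" using \<theta> y by simp
  then have "1/2 \<le> \<theta> * t" using M q(3) unfolding t_def by linarith
  then have "L + \<theta>*e \<le> W/a"
    using deviation_error_bound[OF b \<theta>(1) a1 _ e_def] unfolding W_def L_def by simp
  moreover have "2 * (W/a) < (c-\<theta>)/(c+\<theta>)" "(c-\<theta>)/(c+\<theta>) \<le> 1"
    using a3 a1 \<theta> by (simp_all add: field_simps)
  ultimately have L: "L + \<theta>*e < q2/2" "L + \<theta>*e < 1/2"
    using two_atoms_upper_weight[OF h a2] by linarith+
  have t0: "0 < t" and e0: "0 < e" and ate: "a*t\<^sup>2*e = 1"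
    using y a1 unfolding t_def e_def by auto
  have L0: "0 \<le> L" unfolding L_def using b t0 e0 by simp
  have "e * (c - 2*b*t + 2*a*t*t - a*t\<^sup>2) + e\<^sup>2 * (a*t - b) = e*c + a*t\<^sup>2*e + e\<^sup>2*(a*t) - L"
    unfolding L_def by (simp add: algebra_simps power2_eq_square)
  then have "contestP a b c (t+e) t = 3/2 + e*c + e\<^sup>2*(a*t) - L"
    using contestP_shift_fst[of a b c t e t] ate by (simp add: contestP_diag)
  moreover have "0 \<le> e*c" "0 \<le> e\<^sup>2*(a*t)" "0 < \<theta>*e" using e0 \<theta> a1 t0 by auto
  ultimately have "1 \<le> contestP a b c (t+e) t" using L by linarith
  then have P_t: "contestPbar a b c (t+e) t = 1" by (rule contestPbar_eq_one)
  have "e * (c - 2*b*t + 2*a*t*y1 - a*y1\<^sup>2) + e\<^sup>2 * (a*y1 - b) =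
      e*c + e*(a*y1*(2*t - y1)) + e\<^sup>2*(a*y1) - L"
    unfolding L_def by (simp add: algebra_simps power2_eq_square)
  moreover have "1 \<le> contestP a b c t y1"
    using h contestP_swap[of a b c t y1] unfolding t_def by simp
  moreover have "0 \<le> e*c + e*(a*y1*(2*t - y1)) + e\<^sup>2*(a*y1)"
    using e0 \<theta> a1 y unfolding t_def by simp
  ultimately have "1 - L \<le> contestP a b c (t+e) y1"
    using contestP_shift_fst[of a b c t e y1] by linarith
  then have "1 - L \<le> contestPbar a b c (t+e) y1"
    using min_one_contestP_le_contestPbar[of a b c "t+e" y1] L0 by linarith
  then have "q1 * (1 - L) \<le> q1 * contestPbar a b c (t+e) y1" using q by (simp add: mult_left_mono)
  moreover have "q1 * L \<le> L" using q L0 by (intro mult_left_le_one_le) auto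
  ultimately have "G (t+e) - M \<ge> q2/2 - L - \<theta>*e"
    using G[of "t+e"] M(2) P_t unfolding t_def by (simp add: algebra_simps)
  then have "G (t+e) > M" using L by linarith
  then show False using G_le[of "t+e"] t0 e0 by simp
qed

lemma two_atoms_pure_payoff_on_domain:
  assumes "0 \<le> contestP a b c z y1" "contestP a b c z y1 \<le> 1"
    and "0 \<le> contestP a b c z y2" "contestP a b c z y2 \<le> 1"
  shows "G z = q1 * contestP a b c z y1 + q2 * contestP a b c z y2 - \<theta> * z"
  using G[of z] contestPbar_eq_contestP[OF assms(1,2)] contestPbar_eq_contestP[OF assms(3,4)] by simp

text \<open>In the interior case \<open>G\<close> is a quadratic near \<open>y2\<close> with a local maximum there, and takes the
  same value at \<open>y1\<close>: both its slope and its curvature vanish.\<close>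
lemma two_atoms_interior_stationary:
  assumes "0 < contestP a b c y1 y2" "contestP a b c y1 y2 < 1"
  shows "q1 * (c - 2*b*y2 + 2*a*y2*y1 - a*y1\<^sup>2) + q2 * (c - 2*b*y2 + a*y2\<^sup>2) = \<theta>"
    and "q1 * (a*y1 - b) + q2 * (a*y2 - b) = 0"
proof -
  define p where "p = contestP a b c y2 y1"
  have p: "0 < p" "p < 1" using assms contestP_swap[of a b c y2 y1] unfolding p_def by auto
  define d1 f1 d2 f2
    where "d1 = c - 2*b*y2 + 2*a*y2*y1 - a*y1\<^sup>2" and "f1 = a*y1 - b"
      and "d2 = c - 2*b*y2 + a*y2\<^sup>2" and "f2 = a*y2 - b"
  define Q where "Q z = q1 * contestP a b c z y1 + q2 * contestP a b c z y2 - \<theta> * z" for z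
  define D \<alpha> where "D = q1*d1 + q2*d2 - \<theta>" and "\<alpha> = q1*f1 + q2*f2"
  have P1: "contestP a b c (y2 + \<epsilon>) y1 = p + (\<epsilon>*d1 + \<epsilon>\<^sup>2*f1)" for \<epsilon>
    using contestP_shift_fst[of a b c y2 \<epsilon> y1] unfolding p_def d1_def f1_def by simp
  have P2: "contestP a b c (y2 + \<epsilon>) y2 = 1/2 + (\<epsilon>*d2 + \<epsilon>\<^sup>2*f2)" for \<epsilon>
    using contestP_shift_fst[of a b c y2 \<epsilon> y2] unfolding d2_def f2_def
    by (simp add: contestP_diag power2_eq_square algebra_simps)
  have Q_shift: "Q (y2 + \<epsilon>) = Q y2 + \<epsilon>*D + \<epsilon>\<^sup>2*\<alpha>" for \<epsilon>
    using P1[of \<epsilon>] P1[of 0] P2[of \<epsilon>] P2[of 0] unfolding Q_def D_def \<alpha>_def by (simp add: algebra_simps)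
  have Q_y2: "Q y2 = M"
    using two_atoms_pure_payoff_on_domain[of y2] G_y2 p P1[of 0] by (simp add: contestP_diag Q_def)
  have Q_y1: "Q y1 = M"
    using two_atoms_pure_payoff_on_domain[of y1] G_y1 assms by (simp add: contestP_diag Q_def)
  define m where "m = min p (1 - p)"
  define \<epsilon>\<^sub>0 where "\<epsilon>\<^sub>0 = min (min 1 (y2 - y1)) (min (m / (\<bar>d1\<bar> + \<bar>f1\<bar> + 1)) ((1/2) / (\<bar>d2\<bar> + \<bar>f2\<bar> + 1)))"
  have \<epsilon>\<^sub>0: "0 < \<epsilon>\<^sub>0" unfolding \<epsilon>\<^sub>0_def m_def using y p by (simp add: add_pos_nonneg)
  have local_max: "\<epsilon>*D + \<epsilon>\<^sup>2*\<alpha> \<le> 0" if "\<bar>\<epsilon>\<bar> \<le> \<epsilon>\<^sub>0" for \<epsilon>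
  proof -
    have small: "\<bar>\<epsilon>\<bar> \<le> 1" "\<bar>\<epsilon>\<bar> \<le> y2 - y1" "\<bar>\<epsilon>\<bar> \<le> m / (\<bar>d1\<bar> + \<bar>f1\<bar> + 1)"
        "\<bar>\<epsilon>\<bar> \<le> (1/2) / (\<bar>d2\<bar> + \<bar>f2\<bar> + 1)"
      using that unfolding \<epsilon>\<^sub>0_def min.bounded_iff by simp_all
    have "\<bar>\<epsilon>*d1 + \<epsilon>\<^sup>2*f1\<bar> \<le> m" using abs_linear_quadratic_le[OF small(1,3)] p by (simp add: m_def)
    moreover have "\<bar>\<epsilon>*d2 + \<epsilon>\<^sup>2*f2\<bar> \<le> 1/2" using abs_linear_quadratic_le[OF small(1,4)] by simp
    moreover have "m \<le> p" "m \<le> 1 - p" unfolding m_def by auto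
    ultimately have "0 \<le> contestP a b c (y2 + \<epsilon>) y1" "contestP a b c (y2 + \<epsilon>) y1 \<le> 1"
      "0 \<le> contestP a b c (y2 + \<epsilon>) y2" "contestP a b c (y2 + \<epsilon>) y2 \<le> 1"
      unfolding P1 P2 abs_le_iff by linarith+
    then have "G (y2 + \<epsilon>) = Q (y2 + \<epsilon>)" unfolding Q_def by (rule two_atoms_pure_payoff_on_domain)
    moreover have "0 \<le> y2 + \<epsilon>" using small(2) y by (simp add: abs_le_iff)
    ultimately show ?thesis using G_le[of "y2 + \<epsilon>"] Q_shift[of \<epsilon>] Q_y2 by simp
  qed
  have "D \<le> 0"
    by (rule slope_nonpos_if_perturbations_nonpos[OF \<epsilon>\<^sub>0, where \<alpha>=\<alpha>]) (use local_max in simp)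
  moreover have "-D \<le> 0"
    by (rule slope_nonpos_if_perturbations_nonpos[OF \<epsilon>\<^sub>0, where \<alpha>=\<alpha>]) (use local_max[of "-_"] in simp)
  ultimately have "D = 0" by simp
  then show "q1 * d1 + q2 * d2 = \<theta>" unfolding D_def by simp
  from \<open>D = 0\<close> have "(y1 - y2)\<^sup>2 * \<alpha> = 0" using Q_shift[of "y1 - y2"] Q_y1 Q_y2 by simp
  then show "q1 * f1 + q2 * f2 = 0" using y unfolding \<alpha>_def by simp
qed

lemma two_atoms_interior_moment_equations:
  assumes "0 < contestP a b c y1 y2" "contestP a b c y1 y2 < 1"
  shows "a * (q1*y1 + q2*y2) = b \<and> a * (q1*y1\<^sup>2 + q2*y2\<^sup>2) = c - \<theta>"
proof
  note stationary = two_atoms_interior_stationary[OF assms]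
  have "a * (q1*y1 + q2*y2) = b * (q1 + q2)"
    using stationary(2) by (simp add: algebra_simps)
  then show mean: "a * (q1*y1 + q2*y2) = b" using q(3) by simp
  have "\<theta> = (q1 + q2) * (c - 2*b*y2) + 2*y2*(a*(q1*y1 + q2*y2)) - a*(q1*y1\<^sup>2 + q2*y2\<^sup>2)"
    unfolding stationary(1)[symmetric] by (simp add: algebra_simps power2_eq_square)
  also have "\<dots> = 1 * (c - 2*b*y2) + 2*y2*b - a*(q1*y1\<^sup>2 + q2*y2\<^sup>2)"
    by (simp only: q(3) mean)
  finally show "a * (q1*y1\<^sup>2 + q2*y2\<^sup>2) = c - \<theta>" by simp
qed

lemma two_atoms_moment_equations:
  assumes "a \<ge> two_atom_threshold b c \<theta>"
  shows "a * (q1*y1 + q2*y2) = b \<and> a * (q1*y1\<^sup>2 + q2*y2\<^sup>2) = c - \<theta>"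
  using two_atoms_not_contestP_ge_one two_atoms_not_contestP_le_zero[OF assms]
    two_atoms_interior_moment_equations by linarith

end

lemma nondegenerate_two_point_strategy_exploitable:
  fixes a b c \<theta> :: real
  assumes b: "b > 0" and c: "c > 0" and \<theta>: "0 < \<theta>" "\<theta> < c"
    and a1: "a \<ge> two_atom_threshold b c \<theta>" and a2: "a \<ge> (deviation_threshold b c \<theta>)\<^sup>2"
    and \<rho>: "mixed_strategy \<rho>" and two: "AE x in \<rho>. x = r1 \<or> x = r2" and nd: "nondegenerate \<rho>"
  shows "\<not> unexploitable a b c \<theta> \<rho>"
proof
  assume unexp: "unexploitable a b c \<theta> \<rho>"
  obtain y1 y2 where y: "y1 < y2" and q: "measure \<rho> {y1} > 0" "measure \<rho> {y2} > 0"
      "measure \<rho> {y1} + measure \<rho> {y2} = 1"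
    and integral: "\<And>f. f \<in> borel_measurable borel \<Longrightarrow>
      (\<integral>x. f x \<partial>\<rho>) = measure \<rho> {y1} * f y1 + measure \<rho> {y2} * f y2"
    using nondegenerate_two_point_distribution[OF mixed_strategy_prob_space[OF \<rho>]
        mixed_strategy_sets[OF \<rho>] two nd] by blast
  have G: "pure_payoff a b c \<theta> \<rho> z =
      measure \<rho> {y1} * contestPbar a b c z y1 + measure \<rho> {y2} * contestPbar a b c z y2 - \<theta> * z" for z
    unfolding pure_payoff_def using integral[OF borel_measurable_contestPbar(3)] by simp
  have G_le: "pure_payoff a b c \<theta> \<rho> z \<le> self_payoff \<theta> \<rho>" if "0 \<le> z" for z
    using unexp that unfolding unexploitable_def by blast
  have indifferent: "AE x in \<rho>. pure_payoff a b c \<theta> \<rho> x = self_payoff \<theta> \<rho>"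
    by (rule AE_pure_payoff_eq_self_payoff[OF \<rho> \<rho> unexp payoffX_self[OF \<rho>]])
  have "pure_payoff a b c \<theta> \<rho> y1 = self_payoff \<theta> \<rho>" "pure_payoff a b c \<theta> \<rho> y2 = self_payoff \<theta> \<rho>"
    using AE_atom[OF indifferent] q by auto
  moreover have "0 \<le> y1" using AE_atom[OF mixed_strategy_nonneg[OF \<rho>]] q by auto
  ultimately have "a * (measure \<rho> {y1} * y1 + measure \<rho> {y2} * y2) = b \<and>
      a * (measure \<rho> {y1} * y1\<^sup>2 + measure \<rho> {y2} * y2\<^sup>2) = c - \<theta>"
    using two_atoms_moment_equations[OF b \<theta> _ y q G G_le _ _ a1] by blast
  moreover have "(\<integral>w. w \<partial>\<rho>) = measure \<rho> {y1} * y1 + measure \<rho> {y2} * y2"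
    "(\<integral>w. w\<^sup>2 \<partial>\<rho>) = measure \<rho> {y1} * y1\<^sup>2 + measure \<rho> {y2} * y2\<^sup>2"
    using integral[of "\<lambda>x. x"] integral[of "\<lambda>x. x\<^sup>2"] by simp_all
  ultimately show False using exploitable_if_moment_equations[OF b c \<theta> a2 \<rho>] unexp by simp
qed

lemma no_on_domain_equilibrium_with_nondegenerate_fst:
  fixes a b c \<theta> :: real
  assumes b: "b > 0" and c: "c > 0" and \<theta>: "0 < \<theta>" "\<theta> < c"
    and a1: "a \<ge> two_atom_threshold b c \<theta>" and a2: "a \<ge> (deviation_threshold b c \<theta>)\<^sup>2"
    and eq: "truncated_equilibrium a b c \<theta> \<mu> \<nu>" and dom: "on_domain a b c \<mu> \<nu>"
    and nd: "nondegenerate \<mu>"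
  shows False
proof -
  have \<mu>: "mixed_strategy \<mu>" and \<nu>: "mixed_strategy \<nu>"
    using eq unfolding truncated_equilibrium_def by blast+
  have unexp_\<nu>: "unexploitable a b c \<theta> \<nu>"
    by (rule truncated_equilibrium_unexploitable[OF eq])
  have "AE x in \<mu>. pure_payoff a b c \<theta> \<nu> x = self_payoff \<theta> \<nu>"
    by (rule AE_pure_payoff_eq_self_payoff[OF \<mu> \<nu> unexp_\<nu> truncated_equilibrium_value[OF eq]])
  then have "AE x in \<mu>. gap_poly a b c \<theta> \<nu> x = 0"
    by (rule on_domain_AE_gap_poly_eq_0[OF \<mu> \<nu> dom])
  then obtain r1 r2 where "AE x in \<mu>. x = r1 \<or> x = r2"
    using two_point_support_if_AE_gap_poly_eq_0[OF b c \<theta> a2 \<nu> unexp_\<nu>] by blast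
  moreover have "unexploitable a b c \<theta> \<mu>"
    by (rule truncated_equilibrium_unexploitable[OF truncated_equilibrium_commute[OF eq]])
  ultimately show False
    using nondegenerate_two_point_strategy_exploitable[OF b c \<theta> a1 a2 \<mu> _ nd] by blast
qed

theorem proposition9:
  fixes b c \<theta> :: real
  assumes "b > 0" and "c > 0" and "0 < \<theta>" and "\<theta> < c"
  shows "\<exists>aF::real. \<forall>a. a > 0 \<and> a \<ge> aF \<longrightarrow>
           \<not> (\<exists>\<mu> \<nu>. mixed_equilibrium a b c \<theta> \<mu> \<nu> \<and> on_domain a b c \<mu> \<nu>)"
proof (intro exI allI impI notI)
  fix a :: real
  assume "a > 0 \<and> a \<ge> two_atom_threshold b c \<theta> + (deviation_threshold b c \<theta>)\<^sup>2"
  then have a1: "a \<ge> two_atom_threshold b c \<theta>" and a2: "a \<ge> (deviation_threshold b c \<theta>)\<^sup>2"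
    using two_atom_threshold_nonneg[of b \<theta> c] assms by (smt (verit) zero_le_power2)+
  note no_equilibrium = no_on_domain_equilibrium_with_nondegenerate_fst[OF assms a1 a2]
  assume "\<exists>\<mu> \<nu>. mixed_equilibrium a b c \<theta> \<mu> \<nu> \<and> on_domain a b c \<mu> \<nu>"
  then obtain \<mu> \<nu> where eq: "truncated_equilibrium a b c \<theta> \<mu> \<nu>" and dom: "on_domain a b c \<mu> \<nu>"
    and "nondegenerate \<mu> \<or> nondegenerate \<nu>"
    unfolding mixed_equilibrium_def by blast
  then show False
    using no_equilibrium[OF eq dom] no_equilibrium[OF truncated_equilibrium_commute[OF eq]
        on_domain_commute[OF dom]] by blast
qed

end
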